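(* Let $d=(d_1,\ldots,d_n)$ be a tree degree sequence with $n\geq 3$ (so $d_1\geq\cdots\geq d_n$), and let $\nu$ be an integer. There is a tree $T$ with degree sequence $d$ and $\nu(T)=\nu$ if and only if $$\min\Big\{ k\in \mathbb{N}:\sum_{i=1}^k d_i\geq n-1\Big\}\;\leq\; \nu\;\leq\; \min\left\{ \left\lfloor \frac{n}{2}\right\rfloor,\; n-n_1(d)\right\}.$$
   Context: All graphs are finite, simple and undirected. The degree sequence of a graph is the nonincreasing sequence of its vertex degrees. A tree degree sequence is the degree sequence of some tree. $n_1(d)$ is the number of elements of $d$ equal to $1$. $\nu(T)$ denotes the matching number of $T$. *)

theory Defs
  imports Main
begin

definition simple_graph :: "'a set \<Rightarrow> 'a set set \<Rightarrow> bool" where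
  "simple_graph V E \<longleftrightarrow> finite V \<and>
     (\<forall>e\<in>E. \<exists>u v. e = {u, v} \<and> u \<noteq> v \<and> u \<in> V \<and> v \<in> V)"

definition adj :: "'a set set \<Rightarrow> 'a \<Rightarrow> 'a \<Rightarrow> bool" where
  "adj E u v \<longleftrightarrow> {u, v} \<in> E \<and> u \<noteq> v"

definition connected_graph :: "'a set \<Rightarrow> 'a set set \<Rightarrow> bool" where
  "connected_graph V E \<longleftrightarrow> V \<noteq> {} \<and> (\<forall>u\<in>V. \<forall>v\<in>V. (adj E)\<^sup>*\<^sup>* u v)"

definition is_cycle :: "'a set set \<Rightarrow> 'a list \<Rightarrow> bool" where
  "is_cycle E c \<longleftrightarrow> length c \<ge> 3 \<and> distinct c \<and>
     (\<forall>i. Suc i < length c \<longrightarrow> adj E (c ! i) (c ! Suc i)) \<and>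
     adj E (last c) (hd c)"

definition acyclic_graph :: "'a set set \<Rightarrow> bool" where
  "acyclic_graph E \<longleftrightarrow> \<not> (\<exists>c. is_cycle E c)"

definition is_tree :: "'a set \<Rightarrow> 'a set set \<Rightarrow> bool" where
  "is_tree V E \<longleftrightarrow> simple_graph V E \<and> connected_graph V E \<and> acyclic_graph E"

definition degree :: "'a set set \<Rightarrow> 'a \<Rightarrow> nat" where
  "degree E v = card {e \<in> E. v \<in> e}"

definition degree_sequence :: "nat \<Rightarrow> nat set set \<Rightarrow> nat list" where
  "degree_sequence n E = rev (sort (map (degree E) [0..<n]))"

definition tree_degree_sequence :: "nat list \<Rightarrow> bool" where
  "tree_degree_sequence d \<longleftrightarrow>
     (\<exists>E. is_tree {0..<length d} E \<and> degree_sequence (length d) E = d)"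

definition is_matching :: "'a set set \<Rightarrow> 'a set set \<Rightarrow> bool" where
  "is_matching E M \<longleftrightarrow> M \<subseteq> E \<and> (\<forall>e\<in>M. \<forall>f\<in>M. e \<noteq> f \<longrightarrow> e \<inter> f = {})"

definition matching_number :: "'a set set \<Rightarrow> nat" where
  "matching_number E = Max {card M | M. is_matching E M}"

definition n1 :: "nat list \<Rightarrow> nat" where
  "n1 d = length (filter (\<lambda>x. x = 1) d)"

end

theory Submission
  imports Defs "HOL-Library.Multiset"
begin

text \<open>
  Lower bound: by Koenig's theorem for forests a tree has a vertex cover \<open>C\<close> with
  \<open>|C| \<le> \<nu>(T)\<close>. The vertices of \<open>C\<close> carry all \<open>n - 1\<close> edges, so already the \<open>|C|\<close>
  largest degrees sum to at least \<open>n - 1\<close>. Upper bound: a matching has at most \<open>n/2\<close> edges,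
  and for \<open>n \<ge> 3\<close> no edge joins two leaves, so the non-leaves form a vertex cover.

  Conversely, let \<open>\<nu>\<close> lie in the range and give the \<open>\<nu>\<close> largest degrees to a set \<open>S\<close>.
  We build a tree with the prescribed degrees in which \<open>S\<close> is a vertex cover saturated by a
  matching, so that \<open>\<nu>(T) = |S|\<close>. If \<open>|S| = 1\<close> the tree is a star. Otherwise a vertex
  \<open>x \<in> S\<close> of least degree is made the centre of a pendant star with \<open>d(x) - 1\<close> leaves, hung
  from a tree realising the instance with \<open>x\<close> and these leaves removed.
\<close>

section \<open>Graphs, paths and cycles\<close>

lemma simple_graph_edgeE:
  assumes "simple_graph V E" "e \<in> E"
  obtains a b where "e = {a, b}" "a \<noteq> b" "a \<in> V" "b \<in> V"
  using assms unfolding simple_graph_def by blast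

lemma simple_graph_edge_subset: "simple_graph V E \<Longrightarrow> e \<in> E \<Longrightarrow> e \<subseteq> V"
  by (metis simple_graph_edgeE empty_subsetI insert_subset)

lemma simple_graph_finite_edges: "simple_graph V E \<Longrightarrow> finite E"
  by (meson simple_graph_def Pow_iff finite_Pow_iff rev_finite_subset simple_graph_edge_subset subsetI)

lemma simple_graph_subset: "simple_graph V E \<Longrightarrow> E' \<subseteq> E \<Longrightarrow> simple_graph V E'"
  unfolding simple_graph_def by (meson subsetD)

lemma adj_mono: "E \<subseteq> E' \<Longrightarrow> adj E u v \<Longrightarrow> adj E' u v"
  unfolding adj_def by blast

lemma adj_commute: "adj E u v \<longleftrightarrow> adj E v u"
  unfolding adj_def by (auto simp: insert_commute)

definition is_path :: "'a set set \<Rightarrow> 'a list \<Rightarrow> bool" where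
  "is_path E p \<longleftrightarrow> distinct p \<and> (\<forall>i. Suc i < length p \<longrightarrow> adj E (p ! i) (p ! Suc i))"

lemma is_cycle_iff_path:
  "is_cycle E c \<longleftrightarrow> 3 \<le> length c \<and> is_path E c \<and> adj E (last c) (hd c)"
  unfolding is_cycle_def is_path_def by blast

lemma is_path_snoc:
  assumes "is_path E p" "p \<noteq> []" "y \<notin> set p" "adj E (last p) y"
  shows "is_path E (p @ [y])"
proof -
  have "adj E (p ! i) y" if "Suc i = length p" for i
  proof -
    have "i = length p - 1" using that by simp
    then show ?thesis using assms(2,4) by (simp add: last_conv_nth)
  qed
  then show ?thesis
    using assms unfolding is_path_def by (auto simp: nth_append less_Suc_eq)
qed

lemma is_path_drop: "is_path E p \<Longrightarrow> is_path E (drop j p)"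
  unfolding is_path_def by (auto simp: add.commute[of j] dest: spec[of _ "_ + j"])

lemma is_path_close_cycle:
  assumes "is_path E p" "j + 3 \<le> length p" "adj E (last p) (p ! j)"
  shows "is_cycle E (drop j p)"
  using assms is_path_drop[OF assms(1), of j] unfolding is_cycle_iff_path
  by (simp add: hd_drop_conv_nth)

lemma is_cycle_transfer:
  assumes "is_cycle E c" "\<And>x y. x \<in> set c \<Longrightarrow> y \<in> set c \<Longrightarrow> adj E x y \<Longrightarrow> adj E' x y"
  shows "is_cycle E' c"
proof -
  have "c \<noteq> []" using assms(1) unfolding is_cycle_def by auto
  then show ?thesis
    using assms unfolding is_cycle_def by (auto simp: Suc_lessD)
qed

lemma acyclic_graph_subset: "acyclic_graph E' \<Longrightarrow> E \<subseteq> E' \<Longrightarrow> acyclic_graph E"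
  unfolding acyclic_graph_def using is_cycle_transfer adj_mono by metis

lemma is_cycle_neighbours:
  assumes c: "is_cycle E c" and x: "x \<in> set c"
  obtains y z where "adj E x y" "adj E x z" "y \<noteq> z"
proof -
  let ?L = "length c"
  define next_idx where "next_idx i = (if Suc i = ?L then 0 else Suc i)" for i
  have L: "3 \<le> ?L" "distinct c" using c unfolding is_cycle_def by auto
  have step: "adj E (c ! i) (c ! next_idx i)" if "i < ?L" for i
  proof (cases "Suc i = ?L")
    case True
    have "c \<noteq> []" using L by auto
    moreover have "i = ?L - 1" using True by simp
    ultimately have "c ! i = last c" "c ! 0 = hd c" by (simp_all add: last_conv_nth hd_conv_nth)
    then show ?thesis using c True unfolding is_cycle_def next_idx_def by auto
  next
    case False
    then show ?thesis using c that unfolding is_cycle_def next_idx_def by auto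
  qed
  obtain i where i: "i < ?L" "c ! i = x" using x by (metis in_set_conv_nth)
  define j where "j = (if i = 0 then ?L - 1 else i - 1)"
  have j: "j < ?L" "next_idx j = i" "j \<noteq> next_idx i" "next_idx i < ?L"
    using i L unfolding j_def next_idx_def by auto
  have "c ! j \<noteq> c ! next_idx i"
    using j nth_eq_iff_index_eq[OF L(2) j(1,4)] by simp
  then show ?thesis
    using that step[OF i(1)] step[OF j(1)] i j by (auto simp: adj_commute)
qed

section \<open>Growing and pruning trees\<close>

lemma tree_singleton: "is_tree {s} {}"
  unfolding is_tree_def simple_graph_def connected_graph_def acyclic_graph_def is_cycle_def adj_def
  by auto

lemma connected_graph_add_leaf:
  assumes cg: "connected_graph V E" and u: "u \<in> V"
  shows "connected_graph (insert v V) (insert {u, v} E)"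
  unfolding connected_graph_def
proof (intro conjI ballI)
  let ?E = "insert {u, v} E"
  have mono: "(adj ?E)\<^sup>*\<^sup>* x y" if "(adj E)\<^sup>*\<^sup>* x y" for x y
    using that by (induction rule: rtranclp_induct) (auto intro: rtranclp.rtrancl_into_rtrancl adj_mono)
  have uv: "(adj ?E)\<^sup>*\<^sup>* u v \<and> (adj ?E)\<^sup>*\<^sup>* v u"
  proof (cases "u = v")
    case False
    then have "adj ?E u v" "adj ?E v u" unfolding adj_def by (auto simp: insert_commute)
    then show ?thesis by blast
  qed simp
  fix a b assume a: "a \<in> insert v V" and b: "b \<in> insert v V"
  have "(adj ?E)\<^sup>*\<^sup>* a u" using a cg u uv mono unfolding connected_graph_def by auto
  moreover have "(adj ?E)\<^sup>*\<^sup>* u b" using b cg u uv mono unfolding connected_graph_def by auto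
  ultimately show "(adj ?E)\<^sup>*\<^sup>* a b" by (rule rtranclp_trans)
qed simp

lemma adj_insert_new_vertex:
  assumes sg: "simple_graph V E" and v: "v \<notin> V" and vy: "adj (insert {u, v} E) v y"
  shows "y = u"
proof -
  have "{v, y} \<notin> E" using simple_graph_edge_subset[OF sg] v by blast
  then have "{v, y} = {u, v}" "v \<noteq> y" using vy unfolding adj_def by auto
  then show ?thesis by (auto simp: doubleton_eq_iff)
qed

lemma acyclic_graph_add_leaf:
  assumes sg: "simple_graph V E" and ac: "acyclic_graph E" and v: "v \<notin> V"
  shows "acyclic_graph (insert {u, v} E)"
  unfolding acyclic_graph_def
proof
  let ?E = "insert {u, v} E"
  assume "\<exists>c. is_cycle ?E c"
  then obtain c where c: "is_cycle ?E c" by blast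
  show False
  proof (cases "v \<in> set c")
    case True
    obtain y z where "adj ?E v y" "adj ?E v z" "y \<noteq> z"
      using is_cycle_neighbours[OF c True] by blast
    then show False using adj_insert_new_vertex[OF sg v, of u y] adj_insert_new_vertex[OF sg v, of u z] by simp
  next
    case False
    have transfer: "adj E x y" if "x \<in> set c" "y \<in> set c" "adj ?E x y" for x y
    proof -
      have "v \<notin> {x, y}" using False that(1,2) by auto
      then have "{x, y} \<noteq> {u, v}" by auto
      then show ?thesis using that(3) unfolding adj_def by simp
    qed
    have "is_cycle E c" by (rule is_cycle_transfer[OF c transfer])
    then show False using ac unfolding acyclic_graph_def by blast
  qed
qed

lemma tree_add_leaf:
  assumes T: "is_tree V E" and u: "u \<in> V" and v: "v \<notin> V"
  shows "is_tree (insert v V) (insert {u, v} E)"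
proof -
  have sg: "simple_graph V E" using T is_tree_def by blast
  have "u \<noteq> v" using u v by blast
  then have "simple_graph (insert v V) (insert {u, v} E)"
    using sg u unfolding simple_graph_def by blast
  moreover have "connected_graph (insert v V) (insert {u, v} E)"
    using T u by (simp add: connected_graph_add_leaf is_tree_def)
  moreover have "acyclic_graph (insert {u, v} E)"
    using T v by (simp add: acyclic_graph_add_leaf[OF sg] is_tree_def)
  ultimately show ?thesis unfolding is_tree_def by simp
qed

definition star_edges :: "'a \<Rightarrow> 'a set \<Rightarrow> 'a set set" where
  "star_edges x L = (\<lambda>l. {x, l}) ` L"

lemma tree_attach_leaves:
  assumes "finite L" "is_tree V E" "x \<in> V" "L \<inter> V = {}"
  shows "is_tree (V \<union> L) (E \<union> star_edges x L)"
  using assms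
proof (induction L rule: finite_induct)
  case (insert l L)
  have "is_tree (V \<union> L) (E \<union> star_edges x L)"
    using insert.IH insert.prems by (simp add: Int_insert_left split: if_splits)
  moreover have "x \<in> V \<union> L" "l \<notin> V \<union> L" using insert.hyps insert.prems by auto
  ultimately have "is_tree (insert l (V \<union> L)) (insert {x, l} (E \<union> star_edges x L))"
    by (rule tree_add_leaf)
  moreover have "insert l (V \<union> L) = V \<union> insert l L"
    "insert {x, l} (E \<union> star_edges x L) = E \<union> star_edges x (insert l L)"
    unfolding star_edges_def by auto
  ultimately show ?case by (simp only:)
qed (simp add: star_edges_def)

lemma tree_attach_star:
  assumes T: "is_tree V E" and "w \<in> V" "x \<notin> V" "finite L" "L \<inter> V = {}" "x \<notin> L"
  shows "is_tree (insert x V \<union> L) (E \<union> star_edges x (insert w L))"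
proof -
  have "is_tree (insert x V \<union> L) (insert {w, x} E \<union> star_edges x L)"
    using tree_add_leaf[OF T \<open>w \<in> V\<close> \<open>x \<notin> V\<close>] assms(4-6) by (intro tree_attach_leaves) auto
  moreover have "insert {w, x} E \<union> star_edges x L = E \<union> star_edges x (insert w L)"
    unfolding star_edges_def by (auto simp: insert_commute)
  ultimately show ?thesis by simp
qed

lemma connected_graph_remove_leaf:
  assumes cg: "connected_graph V E" and u: "u \<in> V" "u \<noteq> v"
    and pendant: "\<forall>e\<in>E. v \<in> e \<longrightarrow> e = {u, v}"
  shows "connected_graph (V - {v}) (E - {{u, v}})"
  unfolding connected_graph_def
proof (intro conjI ballI)
  let ?E = "E - {{u, v}}"
  define g where "g z = (if z = v then u else z)" for z
  have g_step: "(adj ?E)\<^sup>*\<^sup>* (g y) (g z)" if "adj E y z" for y z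
  proof (cases "v \<in> {y, z}")
    case True
    then have "{y, z} = {u, v}" "y \<noteq> z" using pendant that unfolding adj_def by auto
    then have "g y = g z" unfolding g_def by (auto simp: doubleton_eq_iff)
    then show ?thesis by simp
  next
    case False
    then have "adj ?E y z" using that unfolding adj_def by auto
    then show ?thesis using False unfolding g_def by auto
  qed
  have reach: "(adj ?E)\<^sup>*\<^sup>* (g a) (g b)" if "(adj E)\<^sup>*\<^sup>* a b" for a b
    using that by (induction rule: rtranclp_induct) (simp, metis g_step rtranclp_trans)
  fix a b assume ab: "a \<in> V - {v}" "b \<in> V - {v}"
  then have "(adj E)\<^sup>*\<^sup>* a b" using cg unfolding connected_graph_def by blast
  then show "(adj ?E)\<^sup>*\<^sup>* a b" using reach[of a b] ab by (simp add: g_def)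
next
  show "V - {v} \<noteq> {}" using u by blast
qed

lemma tree_remove_leaf:
  assumes T: "is_tree V E" and uv: "{u, v} \<in> E" "u \<noteq> v"
    and pendant: "\<forall>e\<in>E. v \<in> e \<longrightarrow> e = {u, v}"
  shows "is_tree (V - {v}) (E - {{u, v}})"
proof -
  have sg: "simple_graph V E" using T is_tree_def by blast
  have u: "u \<in> V" using simple_graph_edge_subset[OF sg uv(1)] by simp
  have "simple_graph (V - {v}) (E - {{u, v}})"
    unfolding simple_graph_def
  proof (intro conjI ballI)
    fix e assume e: "e \<in> E - {{u, v}}"
    then have "v \<notin> e" using pendant by blast
    then show "\<exists>a b. e = {a, b} \<and> a \<noteq> b \<and> a \<in> V - {v} \<and> b \<in> V - {v}"
      using e simple_graph_edgeE[OF sg] by (metis Diff_iff insertCI singletonD)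
  qed (use sg in \<open>simp add: simple_graph_def\<close>)
  moreover have "connected_graph (V - {v}) (E - {{u, v}})"
    using connected_graph_remove_leaf[OF _ u uv(2) pendant] T unfolding is_tree_def by blast
  moreover have "acyclic_graph (E - {{u, v}})"
    using T acyclic_graph_subset unfolding is_tree_def by blast
  ultimately show ?thesis unfolding is_tree_def by simp
qed

lemma simple_graph_longest_path:
  assumes sg: "simple_graph V E" and "E \<noteq> {}"
  obtains p where "is_path E p" "set p \<subseteq> V" "2 \<le> length p"
    "\<And>q. is_path E q \<Longrightarrow> set q \<subseteq> V \<Longrightarrow> length q \<le> length p"
proof -
  define P where "P p \<longleftrightarrow> is_path E p \<and> set p \<subseteq> V" for p
  obtain e where "e \<in> E" using \<open>E \<noteq> {}\<close> by blast
  then obtain a b where ab: "{a, b} \<in> E" "a \<noteq> b" "a \<in> V" "b \<in> V"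
    using simple_graph_edgeE[OF sg] by metis
  then have "P [a, b]" unfolding P_def is_path_def adj_def by (auto simp: less_Suc_eq)
  moreover have "length p < card V + 1" if "P p" for p
    using that card_mono[of V "set p"] distinct_card[of p] sg
    unfolding P_def is_path_def simple_graph_def by simp
  ultimately obtain p where "P p" "\<And>q. P q \<Longrightarrow> length q \<le> length p"
    using ex_has_greatest_nat[of P "[a, b]" length "card V + 1"] by blast
  moreover have "2 \<le> length p" using calculation(2)[OF \<open>P [a, b]\<close>] by simp
  ultimately show ?thesis using that unfolding P_def by blast
qed

lemma acyclic_graph_pendant_edge:
  assumes sg: "simple_graph V E" and ac: "acyclic_graph E" and "E \<noteq> {}"
  obtains u v where "{u, v} \<in> E" "u \<noteq> v" "\<forall>e\<in>E. v \<in> e \<longrightarrow> e = {u, v}"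
proof -
  obtain p where path: "is_path E p" and pV: "set p \<subseteq> V" and L: "2 \<le> length p"
    and longest: "\<And>q. is_path E q \<Longrightarrow> set q \<subseteq> V \<Longrightarrow> length q \<le> length p"
    using simple_graph_longest_path[OF sg \<open>E \<noteq> {}\<close>] by blast
  define u where "u = p ! (length p - 2)"
  have "p \<noteq> []" using L by auto
  then have last_p: "last p = p ! (length p - 1)" by (simp add: last_conv_nth)
  have "Suc (length p - 2) < length p" "Suc (length p - 2) = length p - 1" using L by arith+
  then have uv: "adj E u (last p)" using path unfolding is_path_def u_def last_p by metis
  have "e = {u, last p}" if e: "e \<in> E" "last p \<in> e" for e
  proof -
    obtain a b where ab: "e = {a, b}" "a \<noteq> b" "a \<in> V" "b \<in> V"
      using simple_graph_edgeE[OF sg e(1)] by blast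
    define y where "y = (if a = last p then b else a)"
    have y: "e = {last p, y}" "y \<noteq> last p" "y \<in> V" using ab e(2) unfolding y_def by auto
    have vy: "adj E (last p) y" using y e(1) unfolding adj_def by simp
    have "y \<in> set p"
    proof (rule ccontr)
      assume "y \<notin> set p"
      then have "is_path E (p @ [y])" using path L vy by (intro is_path_snoc) auto
      then show False using longest[of "p @ [y]"] pV y(3) by simp
    qed
    then obtain j where j: "j < length p" "p ! j = y" by (metis in_set_conv_nth)
    have "j \<noteq> length p - 1" using j y(2) last_p by auto
    moreover have "\<not> is_cycle E (drop j p)" using ac unfolding acyclic_graph_def by blast
    then have "\<not> j + 3 \<le> length p" using is_path_close_cycle[OF path] vy j(2) by blast
    ultimately have "j = length p - 2" using j by arith
    then show ?thesis using j y(1) unfolding u_def by auto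
  qed
  then show ?thesis using that uv unfolding adj_def by blast
qed

lemma tree_has_neighbour:
  assumes "is_tree V E" "a \<in> V" "b \<in> V" "b \<noteq> a"
  obtains y where "{a, y} \<in> E"
proof -
  have "(adj E)\<^sup>*\<^sup>* a b" using assms unfolding is_tree_def connected_graph_def by blast
  then show ?thesis
    using that assms(4) by (cases rule: converse_rtranclpE) (auto simp: adj_def)
qed

lemma tree_card_edges:
  assumes "is_tree V E"
  shows "card E = card V - 1"
  using assms
proof (induction "card V" arbitrary: V E rule: less_induct)
  case less
  have sg: "simple_graph V E" and ac: "acyclic_graph E" using less.prems is_tree_def by auto
  have finV: "finite V" using sg simple_graph_def by blast
  show ?case
  proof (cases "E = {}")
    case True
    have "V \<subseteq> {a}" if "a \<in> V" for a
      using tree_has_neighbour[OF less.prems that] True by blast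
    then have "card V \<le> 1" using card_le_Suc0_iff_eq[OF finV] by (simp add: subset_iff)
    then show ?thesis using True by simp
  next
    case False
    then obtain u v where uv: "{u, v} \<in> E" "u \<noteq> v" "\<forall>e\<in>E. v \<in> e \<longrightarrow> e = {u, v}"
      using acyclic_graph_pendant_edge[OF sg ac] by blast
    have v: "v \<in> V" using simple_graph_edge_subset[OF sg uv(1)] by auto
    have "card (E - {{u, v}}) = card (V - {v}) - 1"
      using less.hyps[OF card_Diff1_less[OF finV v]] tree_remove_leaf[OF less.prems uv] by blast
    moreover have "card (V - {v}) \<noteq> 0"
      using simple_graph_edge_subset[OF sg uv(1)] uv(2) finV by (auto simp: card_le_Suc0_iff_eq)
    moreover have "card (E - {{u, v}}) = card E - 1" "card (V - {v}) = card V - 1" "card E \<noteq> 0"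
      using simple_graph_finite_edges[OF sg] finV uv(1) v by (auto simp: card_Diff_singleton)
    ultimately show ?thesis by linarith
  qed
qed

section \<open>Degrees\<close>

lemma degree_sum:
  assumes sg: "simple_graph V E"
  shows "(\<Sum>v\<in>V. degree E v) = 2 * card E"
proof -
  have finV: "finite V" using sg simple_graph_def by blast
  have finE: "finite E" using simple_graph_finite_edges[OF sg] .
  have "(\<Sum>v\<in>V. degree E v) = (\<Sum>v\<in>V. \<Sum>e\<in>E. if v \<in> e then 1 else 0)"
    unfolding degree_def card_eq_sum by (simp only: sum.inter_filter[OF finE])
  also have "\<dots> = (\<Sum>e\<in>E. \<Sum>v\<in>V. if v \<in> e then 1 else 0)" by (rule sum.swap)
  also have "\<dots> = (\<Sum>e\<in>E. 2)"
  proof (rule sum.cong[OF refl])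
    fix e assume "e \<in> E"
    then obtain a b where ab: "e = {a, b}" "a \<noteq> b" "a \<in> V" "b \<in> V"
      using simple_graph_edgeE[OF sg] by blast
    then have "{v \<in> V. v \<in> e} = e" by auto
    moreover have "card {v \<in> V. v \<in> e} = (\<Sum>v\<in>V. if v \<in> e then 1 else 0)"
      unfolding card_eq_sum by (rule sum.inter_filter[OF finV])
    ultimately show "(\<Sum>v\<in>V. if v \<in> e then 1 else 0) = (2::nat)" using ab by simp
  qed
  finally show ?thesis by simp
qed

lemma tree_degree_pos:
  assumes T: "is_tree V E" and v: "v \<in> V" and "2 \<le> card V"
  shows "1 \<le> degree E v"
proof -
  have finV: "finite V" and finE: "finite E"
    using T simple_graph_finite_edges unfolding is_tree_def simple_graph_def by auto
  have "\<not> V \<subseteq> {v}" using card_mono[of "{v}" V] \<open>2 \<le> card V\<close> by auto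
  then obtain b where "b \<in> V" "b \<noteq> v" by blast
  then obtain y where "{v, y} \<in> E" using tree_has_neighbour[OF T v] by blast
  then have "{e \<in> E. v \<in> e} \<noteq> {}" by blast
  then show ?thesis unfolding degree_def using finE by (simp add: Suc_le_eq card_gt_0_iff)
qed

lemma degree_one_edge:
  assumes "degree E a = 1" "{a, b} \<in> E" "e \<in> E" "a \<in> e"
  shows "e = {a, b}"
proof -
  obtain x where x: "{e \<in> E. a \<in> e} = {x}"
    using assms(1) unfolding degree_def by (rule card_1_singletonE)
  have "{a, b} \<in> {e \<in> E. a \<in> e}" "e \<in> {e \<in> E. a \<in> e}" using assms(2-) by simp_all
  then show ?thesis unfolding x by simp
qed

text \<open>An edge joining two leaves would be a whole connected component.\<close>
lemma tree_edge_nonleaf_end: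
  assumes T: "is_tree V E" and "3 \<le> card V" and ab: "{a, b} \<in> E"
  shows "degree E a \<noteq> 1 \<or> degree E b \<noteq> 1"
proof (rule ccontr)
  assume "\<not> ?thesis"
  then have leaves: "degree E a = 1" "degree E b = 1" by auto
  have sg: "simple_graph V E" using T is_tree_def by blast
  have finV: "finite V" using sg simple_graph_def by blast
  have aV: "a \<in> V" using simple_graph_edge_subset[OF sg ab] by simp
  have closed: "z \<in> {a, b}" if "(adj E)\<^sup>*\<^sup>* a z" for z
    using that
  proof (induction rule: rtranclp_induct)
    case (step y z)
    then have yz: "{y, z} \<in> E" "y \<in> {a, b}" unfolding adj_def by auto
    have "{b, a} \<in> E" using ab by (simp add: insert_commute)
    then have "{y, z} = {a, b}"
      using yz degree_one_edge[OF leaves(1) ab yz(1)] degree_one_edge[OF leaves(2) _ yz(1)]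
      by (auto simp: insert_commute)
    then show ?case by (metis insertCI)
  qed simp
  have "card {a, b} \<le> 2" by (simp add: card_insert_if)
  then have "\<not> V \<subseteq> {a, b}" using card_mono[of "{a, b}" V] \<open>3 \<le> card V\<close> by auto
  then obtain z where "z \<in> V" "z \<notin> {a, b}" by blast
  moreover have "(adj E)\<^sup>*\<^sup>* a z" using T aV \<open>z \<in> V\<close> unfolding is_tree_def connected_graph_def by blast
  ultimately show False using closed by blast
qed

lemma degree_star_edges:
  assumes "finite L" "x \<notin> L"
  shows "degree (star_edges x L) v = (if v = x then card L else if v \<in> L then 1 else 0)"
proof -
  have "inj_on (\<lambda>l. {x, l}) L" by (rule inj_onI) (auto simp: doubleton_eq_iff)
  moreover have "{e \<in> star_edges x L. v \<in> e} =
      (if v = x then star_edges x L else if v \<in> L then {{x, v}} else {})"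
    using assms(2) unfolding star_edges_def by auto
  ultimately show ?thesis unfolding degree_def star_edges_def by (simp add: card_image)
qed

lemma degree_Un_disjoint:
  assumes "finite E" "finite F" "E \<inter> F = {}"
  shows "degree (E \<union> F) v = degree E v + degree F v"
proof -
  have "{e \<in> E \<union> F. v \<in> e} = {e \<in> E. v \<in> e} \<union> {e \<in> F. v \<in> e}" by blast
  then show ?thesis unfolding degree_def using assms by (simp add: card_Un_disjoint disjoint_iff)
qed

lemma degree_outside: "simple_graph V E \<Longrightarrow> v \<notin> V \<Longrightarrow> degree E v = 0"
  unfolding degree_def using simple_graph_edge_subset simple_graph_finite_edges by fastforce

section \<open>Matchings and vertex covers\<close>

definition vertex_cover :: "'a set set \<Rightarrow> 'a set \<Rightarrow> bool" where
  "vertex_cover E C \<longleftrightarrow> (\<forall>e\<in>E. e \<inter> C \<noteq> {})"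

lemma is_matching_insert:
  assumes "is_matching E M" "e \<in> E" "\<forall>f\<in>M. e \<inter> f = {}"
  shows "is_matching E (insert e M)"
  using assms unfolding is_matching_def by (auto simp: Int_commute)

lemma card_matching_le_cover:
  assumes M: "is_matching E M" and "finite C" and C: "vertex_cover E C"
  shows "card M \<le> card C"
proof -
  define pick where "pick e = (SOME c. c \<in> e \<inter> C)" for e
  have pick: "pick e \<in> e \<inter> C" if "e \<in> M" for e
    using that M C unfolding pick_def some_in_eq is_matching_def vertex_cover_def by blast
  have "inj_on pick M"
  proof (rule inj_onI)
    fix e f assume ef: "e \<in> M" "f \<in> M" "pick e = pick f"
    then have "pick e \<in> e \<inter> f" using pick[OF ef(1)] pick[OF ef(2)] by simp
    then show "e = f" using M ef(1,2) unfolding is_matching_def by auto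
  qed
  moreover have "pick ` M \<subseteq> C" using pick by blast
  ultimately show ?thesis using card_inj_on_le \<open>finite C\<close> by blast
qed

lemma card_le_sum_degree_cover:
  assumes "finite E" "finite C" "vertex_cover E C"
  shows "card E \<le> (\<Sum>c\<in>C. degree E c)"
proof -
  have "E \<subseteq> (\<Union>c\<in>C. {e \<in> E. c \<in> e})" using assms(3) unfolding vertex_cover_def by blast
  then have "card E \<le> card (\<Union>c\<in>C. {e \<in> E. c \<in> e})" using assms(1,2) by (intro card_mono) auto
  also have "\<dots> \<le> (\<Sum>c\<in>C. card {e \<in> E. c \<in> e})" by (rule card_UN_le[OF assms(2)])
  finally show ?thesis unfolding degree_def .
qed

lemma matching_card_le_half:
  assumes sg: "simple_graph V E" and M: "is_matching E M"
  shows "2 * card M \<le> card V"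
proof -
  have ME: "M \<subseteq> E" using M is_matching_def by blast
  have two: "card e = 2" if "e \<in> M" for e
    using simple_graph_edgeE[OF sg] ME that by (metis card_2_iff subsetD)
  have "card (\<Union>M) = (\<Sum>e\<in>M. card e)"
    using M two by (intro card_Union_disjoint)
      (auto simp: pairwise_def disjnt_def is_matching_def intro: card_ge_0_finite)
  also have "\<dots> = 2 * card M" using two by simp
  finally have "card (\<Union>M) = 2 * card M" .
  moreover have "\<Union>M \<subseteq> V" using ME simple_graph_edge_subset[OF sg] by blast
  ultimately show ?thesis using card_mono sg unfolding simple_graph_def by metis
qed

lemma tree_nonleaves_vertex_cover:
  assumes "is_tree V E" "3 \<le> card V"
  shows "vertex_cover E {v \<in> V. degree E v \<noteq> 1}"
  unfolding vertex_cover_def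
proof
  fix e assume "e \<in> E"
  then obtain a b where ab: "e = {a, b}" "a \<in> V" "b \<in> V"
    using assms(1) simple_graph_edgeE unfolding is_tree_def by blast
  then show "e \<inter> {v \<in> V. degree E v \<noteq> 1} \<noteq> {}"
    using tree_edge_nonleaf_end[OF assms, of a b] \<open>e \<in> E\<close> by auto
qed

text \<open>Koenig's theorem for forests: peel off a pendant edge \<open>{u, v}\<close>, match it and put \<open>u\<close>
  into the cover, then recurse on the edges not containing \<open>u\<close>.\<close>
lemma forest_matching_cover:
  assumes "simple_graph V E" "acyclic_graph E"
  shows "\<exists>M C. is_matching E M \<and> C \<subseteq> V \<and> vertex_cover E C \<and> card C \<le> card M"
  using assms
proof (induction "card E" arbitrary: E rule: less_induct)
  case less
  have sg: "simple_graph V E" and ac: "acyclic_graph E" by fact+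
  have finE: "finite E" using simple_graph_finite_edges[OF sg] .
  show ?case
  proof (cases "E = {}")
    case True
    show ?thesis
      by (rule exI[of _ "{}"], rule exI[of _ "{}"]) (simp add: is_matching_def vertex_cover_def True)
  next
    case False
    then obtain u v where uv: "{u, v} \<in> E" "u \<noteq> v" "\<forall>e\<in>E. v \<in> e \<longrightarrow> e = {u, v}"
      using acyclic_graph_pendant_edge[OF sg ac] by blast
    define E' where "E' = {e \<in> E. u \<notin> e}"
    have E'E: "E' \<subset> E" using uv unfolding E'_def by auto
    have "simple_graph V E'" using simple_graph_subset[OF sg] E'E by blast
    moreover have "acyclic_graph E'" using acyclic_graph_subset[OF ac] E'E by blast
    ultimately obtain M' C' where IH: "is_matching E' M'" "C' \<subseteq> V" "vertex_cover E' C'"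
      "card C' \<le> card M'"
      using less.hyps[OF psubset_card_mono[OF finE E'E]] by blast
    have "M' \<subseteq> E'" using IH(1) is_matching_def by blast
    have disj: "\<forall>f\<in>M'. {u, v} \<inter> f = {}"
    proof
      fix f assume "f \<in> M'"
      then have f: "f \<in> E" "u \<notin> f" using \<open>M' \<subseteq> E'\<close> unfolding E'_def by auto
      then have "v \<notin> f" using uv(3) by (metis insertCI)
      then show "{u, v} \<inter> f = {}" using f(2) by simp
    qed
    have "is_matching E M'" using IH(1) E'E unfolding is_matching_def by blast
    then have "is_matching E (insert {u, v} M')" using uv(1) disj by (rule is_matching_insert)
    moreover have "vertex_cover E (insert u C')"
      using IH(3) unfolding vertex_cover_def E'_def by fastforce
    moreover have "insert u C' \<subseteq> V" using IH(2) simple_graph_edge_subset[OF sg uv(1)] by simp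
    moreover have "card (insert u C') \<le> card (insert {u, v} M')"
    proof -
      have "M' \<subseteq> E" using \<open>M' \<subseteq> E'\<close> E'E by blast
      then have "finite M'" using finE by (rule finite_subset)
      moreover have "finite C'" using IH(2) sg unfolding simple_graph_def by (simp add: finite_subset)
      moreover have "{u, v} \<notin> M'" using disj by (metis Int_absorb insert_not_empty)
      ultimately show ?thesis using IH(4) by (simp add: card_insert_if)
    qed
    ultimately show ?thesis by (intro exI conjI)
  qed
qed

lemma matching_number_finite:
  assumes "simple_graph V E"
  shows "finite {card M | M. is_matching E M}"
proof (rule finite_subset)
  show "{card M | M. is_matching E M} \<subseteq> card ` Pow E" unfolding is_matching_def by auto
  show "finite (card ` Pow E)" using simple_graph_finite_edges[OF assms] by simp
qed

lemma card_le_matching_number: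
  "simple_graph V E \<Longrightarrow> is_matching E M \<Longrightarrow> card M \<le> matching_number E"
  unfolding matching_number_def using matching_number_finite by (blast intro: Max_ge)

lemma matching_number_attained:
  assumes "simple_graph V E"
  obtains M where "is_matching E M" "card M = matching_number E"
proof -
  have "is_matching E {}" unfolding is_matching_def by simp
  then have "matching_number E \<in> {card M | M. is_matching E M}"
    unfolding matching_number_def using matching_number_finite[OF assms] by (intro Max_in) auto
  then obtain M where "is_matching E M" "matching_number E = card M" by blast
  then show ?thesis using that by simp
qed

lemma matching_number_eqI:
  assumes "simple_graph V E" "is_matching E M" "finite C" "vertex_cover E C" "card C \<le> card M"
  shows "matching_number E = card M"
proof -
  obtain M' where "is_matching E M'" "card M' = matching_number E"
    using matching_number_attained[OF assms(1)] by blast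
  then have "matching_number E \<le> card C" using card_matching_le_cover assms(3,4) by metis
  then show ?thesis using card_le_matching_number[OF assms(1,2)] assms(5) by linarith
qed

section \<open>Degree sequences\<close>

lemma sum_list_take_mono:
  fixes d :: "'a::canonically_ordered_monoid_add list"
  assumes "k \<le> k'"
  shows "sum_list (take k d) \<le> sum_list (take k' d)"
proof -
  have "take k' d = take k d @ take (k' - k) (drop k d)"
    using assms by (metis le_add_diff_inverse take_add)
  then show ?thesis by (metis le_iff_add sum_list_append)
qed

lemma sum_mset_le_sum_take:
  fixes d :: "'a::ordered_comm_monoid_add list"
  assumes "sorted_wrt (\<ge>) d" "A \<subseteq># mset d"
  shows "sum_mset A \<le> sum_list (take (size A) d)"
  using assms
proof (induction d arbitrary: A)
  case (Cons a d)
  have sorted: "sorted_wrt (\<ge>) d" and below: "\<forall>x\<in>set d. x \<le> a" using Cons.prems(1) by auto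
  show ?case
  proof (cases "a \<in># A")
    case True
    then obtain A' where A: "A = add_mset a A'" by (metis insert_DiffM)
    then have "A' \<subseteq># mset d" using Cons.prems(2) by simp
    then show ?thesis using Cons.IH[OF sorted] A by (simp add: add_left_mono)
  next
    case False
    then have "A \<subseteq># mset d"
      using Cons.prems(2) by (metis add_mset_add_single diff_single_trivial mset.simps(2) subset_eq_diff_conv)
    then have IH: "sum_mset A \<le> sum_list (take (size A) d)" using Cons.IH[OF sorted] by blast
    show ?thesis
    proof (cases "size A")
      case (Suc k)
      have "k < length d" using size_mset_mono[OF \<open>A \<subseteq># mset d\<close>] Suc by simp
      then have "sum_list (take (Suc k) d) \<le> a + sum_list (take k d)"
        using below nth_mem by (simp add: take_Suc_conv_app_nth add_right_mono add.commute)
      then show ?thesis using IH Suc by simp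
    qed (simp add: IH)
  qed
qed simp

lemma length_degree_sequence [simp]: "length (degree_sequence n E) = n"
  unfolding degree_sequence_def by simp

lemma mset_degree_sequence: "mset (degree_sequence n E) = mset (map (degree E) [0..<n])"
  unfolding degree_sequence_def by simp

lemma sorted_degree_sequence: "sorted_wrt (\<ge>) (degree_sequence n E)"
  unfolding degree_sequence_def by (simp add: sorted_wrt_rev)

lemma sum_list_degree_sequence: "sum_list (degree_sequence n E) = (\<Sum>v\<in>{0..<n}. degree E v)"
proof -
  have "sum_list (degree_sequence n E) = sum_list (map (degree E) [0..<n])"
    by (metis mset_degree_sequence sum_mset_sum_list)
  then show ?thesis by (simp add: sum_set_upt_conv_sum_list_nat[symmetric])
qed

lemma n1_degree_sequence: "n1 (degree_sequence n E) = card {v \<in> {0..<n}. degree E v = 1}"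
proof -
  have "n1 (degree_sequence n E) = length (filter (\<lambda>x. x = 1) (map (degree E) [0..<n]))"
    unfolding n1_def by (rule mset_eq_length) (simp add: mset_filter mset_degree_sequence)
  also have "\<dots> = card {v \<in> {0..<n}. degree E v = 1}"
    by (simp add: length_filter_conv_card) (intro arg_cong[where f = card] Collect_cong, auto)
  finally show ?thesis .
qed

lemma degree_sequence_eqI:
  assumes "sorted_wrt (\<ge>) d" "\<forall>v < length d. degree E v = d ! v"
  shows "degree_sequence (length d) E = d"
proof -
  have "map (degree E) [0..<length d] = d" using assms(2) by (intro nth_equalityI) simp_all
  moreover have "sort d = rev d"
    by (rule properties_for_sort) (use assms(1) in \<open>simp_all add: sorted_wrt_rev\<close>)
  ultimately show ?thesis unfolding degree_sequence_def by simp
qed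

lemma sum_degree_le_sum_take_degree_sequence:
  assumes "C \<subseteq> {0..<n}"
  shows "(\<Sum>c\<in>C. degree E c) \<le> sum_list (take (card C) (degree_sequence n E))"
proof -
  have fin: "finite C" using assms finite_subset by blast
  have "mset_set C \<subseteq># mset [0..<n]"
    using subset_imp_msubset_mset_set[OF assms] by simp
  then have "image_mset (degree E) (mset_set C) \<subseteq># mset (degree_sequence n E)"
    unfolding mset_degree_sequence mset_map by (rule image_mset_subseteq_mono)
  from sum_mset_le_sum_take[OF sorted_degree_sequence this] fin show ?thesis
    by (simp add: sum_unfold_sum_mset)
qed

lemma sorted_nth_ge_two:
  fixes d :: "nat list"
  assumes sorted: "sorted_wrt (\<ge>) d" and pos: "\<forall>x\<in>set d. 1 \<le> x" and i: "i < length d - n1 d"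
  shows "2 \<le> d ! i"
proof (rule ccontr)
  assume "\<not> 2 \<le> d ! i"
  moreover have "d ! j \<le> d ! i" if "i \<le> j" "j < length d" for j
    using sorted_wrt_nth_less[OF sorted, of i j] that by (cases "i = j") auto
  ultimately have "d ! j = 1" if "i \<le> j" "j < length d" for j
    using pos nth_mem[of j d] that by fastforce
  then have "{i..<length d} \<subseteq> {j. j < length d \<and> d ! j = 1}" by auto
  then have "card {i..<length d} \<le> n1 d"
    unfolding n1_def length_filter_conv_card by (intro card_mono) auto
  then show False using i by simp
qed

lemma degree_sequence_tree_pos:
  assumes "is_tree {0..<n} E" "2 \<le> n"
  shows "\<forall>x\<in>set (degree_sequence n E). 1 \<le> x"
proof -
  have "set (degree_sequence n E) = degree E ` {0..<n}"
    using mset_degree_sequence[of n E] by (metis list.set_map mset_eq_setD set_upt)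
  then show ?thesis using tree_degree_pos[OF assms(1)] assms(2) by auto
qed

lemma sum_list_degree_sequence_tree:
  assumes "is_tree {0..<n} E"
  shows "sum_list (degree_sequence n E) = 2 * n - 2"
  using degree_sum[of "{0..<n}" E] tree_card_edges[OF assms] assms
  unfolding sum_list_degree_sequence is_tree_def by simp

section \<open>Realising a degree sequence with a prescribed matching number\<close>

lemma degree_attach_star:
  assumes sg: "simple_graph V E" and "w \<in> V" "x \<notin> V" "finite L" "L \<inter> V = {}" "x \<notin> L"
  shows "degree (E \<union> star_edges x (insert w L)) v =
    degree E v + (if v = x then Suc (card L) else if v \<in> insert w L then 1 else 0)"
proof -
  have "E \<inter> star_edges x (insert w L) = {}"
    using simple_graph_edge_subset[OF sg] assms(3) unfolding star_edges_def by blast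
  moreover have "w \<notin> L" "x \<notin> insert w L" "finite (star_edges x (insert w L))"
    using assms(2-6) unfolding star_edges_def by auto
  ultimately show ?thesis
    using degree_Un_disjoint[OF simple_graph_finite_edges[OF sg], of _ v]
      degree_star_edges[of "insert w L" x v] assms(4) by simp
qed

lemma matching_attach_star:
  assumes sg: "simple_graph V E" and M: "is_matching E M" and "x \<notin> V" "l \<in> L" "L \<inter> V = {}"
  shows "is_matching (E \<union> star_edges x (insert w L)) (insert {x, l} M)"
    and "card (insert {x, l} M) = Suc (card M)"
proof -
  have ME: "M \<subseteq> E" using M is_matching_def by blast
  then have disj: "\<forall>f\<in>M. {x, l} \<inter> f = {}" using simple_graph_edge_subset[OF sg] assms(3-5) by blast
  moreover have "is_matching (E \<union> star_edges x (insert w L)) M" using M unfolding is_matching_def by blast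
  moreover have "{x, l} \<in> E \<union> star_edges x (insert w L)" using assms(4) unfolding star_edges_def by blast
  ultimately show "is_matching (E \<union> star_edges x (insert w L)) (insert {x, l} M)"
    by (intro is_matching_insert)
  have "finite M" using ME simple_graph_finite_edges[OF sg] by (rule finite_subset)
  then show "card (insert {x, l} M) = Suc (card M)"
    using disj by (metis Int_absorb card_insert_disjoint insert_not_empty)
qed

lemma realisation_attach_star:
  assumes T: "is_tree V E" and deg: "\<forall>v\<in>V. degree E v = (f(w := f w - 1)) v"
    and cover: "vertex_cover E S" and M: "is_matching E M"
    and w: "w \<in> V" "1 \<le> f w" and x: "x \<notin> V" "x \<notin> L" "card L = f x - 1" "1 \<le> f x"
    and L: "finite L" "L \<inter> V = {}" "l \<in> L" "\<forall>v\<in>L. f v = 1"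
  shows "\<exists>E' M'. is_tree (insert x V \<union> L) E' \<and> (\<forall>v\<in>insert x V \<union> L. degree E' v = f v) \<and>
    vertex_cover E' (insert x S) \<and> is_matching E' M' \<and> card M' = Suc (card M)"
proof (intro exI conjI)
  let ?E = "E \<union> star_edges x (insert w L)"
  have sg: "simple_graph V E" using T is_tree_def by blast
  show "is_tree (insert x V \<union> L) ?E" using tree_attach_star[OF T w(1) x(1) L(1,2) x(2)] .
  show "\<forall>v\<in>insert x V \<union> L. degree ?E v = f v"
    using degree_attach_star[OF sg w(1) x(1) L(1,2) x(2)] degree_outside[OF sg] deg w x L by auto
  show "vertex_cover ?E (insert x S)"
    using cover unfolding vertex_cover_def star_edges_def by auto
  show "is_matching ?E (insert {x, l} M)" "card (insert {x, l} M) = Suc (card M)"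
    using matching_attach_star[OF sg M x(1) L(3,2)] by auto
qed

text \<open>\<open>f\<close> prescribes the degrees of a tree on \<open>V\<close>, and \<open>S\<close> is to become a vertex cover that some
  matching saturates. When \<open>S\<close> carries the \<open>|S|\<close> largest degrees, \<open>card V - 1 \<le> sum f S\<close> and
  \<open>2 * card S \<le> card V\<close> are the lower bound and the first upper bound of the theorem, and the
  last condition is the bound \<open>|S| \<le> n - n\<^sub>1(d)\<close>.\<close>
definition admissible :: "'a set \<Rightarrow> ('a \<Rightarrow> nat) \<Rightarrow> 'a set \<Rightarrow> bool" where
  "admissible V f S \<longleftrightarrow> finite V \<and> 2 \<le> card V \<and> (\<forall>v\<in>V. 1 \<le> f v) \<and>
     sum f V = 2 * card V - 2 \<and> S \<subseteq> V \<and> S \<noteq> {} \<and> card V - 1 \<le> sum f S \<and>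
     2 * card S \<le> card V \<and> (card S = 1 \<or> (\<forall>s\<in>S. 2 \<le> f s))"

lemma sum_le_card_imp_one:
  fixes f :: "'a \<Rightarrow> nat"
  assumes "finite A" "\<forall>v\<in>A. 1 \<le> f v" "sum f A \<le> card A" "v \<in> A"
  shows "f v = 1"
proof -
  have "(\<Sum>v\<in>A. f v - 1) = sum f A - card A"
    using assms(2) by (simp add: sum_subtractf_nat)
  then have "(\<Sum>v\<in>A. f v - 1) = 0" using assms(3) by simp
  then show ?thesis using assms(1,2,4) by (simp add: sum_eq_0_iff) (metis le_antisym)
qed

lemma admissible_star:
  assumes adm: "admissible V f {s}"
  shows "\<exists>E M. is_tree V E \<and> (\<forall>v\<in>V. degree E v = f v) \<and> vertex_cover E {s} \<and>
    is_matching E M \<and> card M = card {s}"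
proof -
  have V: "finite V" "2 \<le> card V" "s \<in> V" and pos: "\<forall>v\<in>V. 1 \<le> f v"
    and sum: "sum f V = 2 * card V - 2" "card V - 1 \<le> f s"
    using adm unfolding admissible_def by auto
  let ?L = "V - {s}"
  have cardL: "card ?L = card V - 1" using V by simp
  have split: "sum f V = f s + sum f ?L" using V by (simp add: sum.remove)
  have "card ?L \<le> sum f ?L" using sum_bounded_below[of ?L 1 f] pos by simp
  then have "sum f ?L \<le> card ?L" using split sum cardL V(2) by linarith
  then have leaves: "f v = 1" if "v \<in> ?L" for v
    using sum_le_card_imp_one[of ?L f v] V(1) pos that by simp
  have centre: "f s = card ?L" using split sum cardL V(2) \<open>card ?L \<le> sum f ?L\<close> by linarith
  have "card ?L \<noteq> 0" using V(2) cardL by simp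
  then have "?L \<noteq> {}" by (intro notI) simp
  then obtain l where l: "l \<in> ?L" by blast
  let ?E = "star_edges s ?L"
  have "is_tree ({s} \<union> ?L) ({} \<union> ?E)"
    using V tree_singleton by (intro tree_attach_leaves) auto
  then have "is_tree V ?E" using V(3) by (simp add: insert_absorb)
  moreover have "\<forall>v\<in>V. degree ?E v = f v" using degree_star_edges[of ?L s] V(1) leaves centre by auto
  moreover have "vertex_cover ?E {s}" unfolding vertex_cover_def star_edges_def by auto
  moreover have "is_matching ?E {{s, l}}" using l unfolding is_matching_def star_edges_def by auto
  ultimately show ?thesis by (intro exI[of _ ?E] exI[of _ "{{s, l}}"]) simp
qed

lemma admissible_leaf_count:
  assumes adm: "admissible V f S" and lower: "\<forall>s\<in>S. a \<le> f s" "2 \<le> a"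
  shows "card S * a + 2 \<le> card {v \<in> V. f v = 1} + 2 * card S"
proof -
  define Lv where "Lv = {v \<in> V. f v = 1}"
  define R where "R = V - (S \<union> Lv)"
  have V: "finite V" "2 \<le> card V" "S \<subseteq> V" "\<forall>v\<in>V. 1 \<le> f v" "sum f V = 2 * card V - 2"
    using adm unfolding admissible_def by auto
  have fin: "finite S" "finite Lv" using V(1,3) finite_subset unfolding Lv_def by auto
  have disj: "S \<inter> Lv = {}" using lower unfolding Lv_def by fastforce
  have sub: "S \<union> Lv \<subseteq> V" using V(3) unfolding Lv_def by blast
  have "sum f V = sum f S + sum f Lv + sum f R"
    using sum.subset_diff[OF sub V(1), of f] sum.union_disjoint[OF fin disj, of f] unfolding R_def
    by (simp add: add.commute)
  moreover have "card V = card S + card Lv + card R"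
    using card_Diff_subset[OF _ sub] card_mono[OF V(1) sub] card_Un_disjoint[OF fin disj] fin
    unfolding R_def by simp
  moreover have "sum f Lv = card Lv" unfolding Lv_def by simp
  moreover have "card S * a \<le> sum f S" using sum_bounded_below[of S a f] lower(1) by (simp add: mult.commute)
  moreover have "2 * card R \<le> sum f R"
    using sum_bounded_below[of R 2 f] V(4) unfolding R_def Lv_def by force
  ultimately show ?thesis using V(2,5) unfolding Lv_def by linarith
qed

lemma admissible_pivot_room:
  assumes adm: "admissible V f S" and "2 \<le> card S" and x: "x \<in> S" "\<forall>y\<in>S. f x \<le> f y"
  shows "f x - 1 \<le> card {v \<in> V. f v = 1}" and "2 * (card S - 1) + f x \<le> card V"
proof -
  define N a Lv where "N = card S" and "a = f x" and "Lv = {v \<in> V. f v = 1}"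
  have V: "finite V" "S \<subseteq> V" "2 * N \<le> card V" and a: "2 \<le> a"
    using adm \<open>2 \<le> card S\<close> x(1) unfolding admissible_def N_def a_def by auto
  have count: "N * a + 2 \<le> card Lv + 2 * N"
    using admissible_leaf_count[OF adm _ a] x(2) unfolding N_def a_def Lv_def by blast
  have N: "N = Suc (N - 1)" using \<open>2 \<le> card S\<close> unfolding N_def by simp
  then have Na: "N * a = (N - 1) * a + a" by (metis mult_Suc add.commute)
  have "(N - 1) * 2 \<le> (N - 1) * a" using a by simp
  with count Na show "f x - 1 \<le> card Lv" unfolding a_def by linarith
  have "S \<inter> Lv = {}" using a x(2) unfolding a_def Lv_def by fastforce
  then have "N + card Lv \<le> card V"
    using card_Un_disjoint[of S Lv] card_mono[OF V(1), of "S \<union> Lv"] V(1,2) finite_subset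
    unfolding N_def Lv_def by fastforce
  moreover have "3 \<le> a \<Longrightarrow> (N - 1) * 3 \<le> (N - 1) * a" by simp
  ultimately show "2 * (card S - 1) + f x \<le> card V"
    using count Na N V(3) a unfolding N_def[symmetric] a_def[symmetric] by (cases "a = 2") linarith+
qed

lemma admissible_pivot_partner:
  assumes adm: "admissible V f S" and S2: "2 \<le> card S" and x: "x \<in> S" "\<forall>y\<in>S. f x \<le> f y"
  obtains w where "w \<in> V" "w \<noteq> x" "2 \<le> f w"
    "w \<in> S \<Longrightarrow> card V \<le> sum f S \<and> (card S = 2 \<or> 3 \<le> f w)"
proof (cases "\<exists>w\<in>V - S. 2 \<le> f w")
  case True
  then show ?thesis using that x(1) by blast
next
  case False
  have V: "finite V" "S \<subseteq> V" "\<forall>v\<in>V. 1 \<le> f v" "sum f V = 2 * card V - 2" "2 * card S \<le> card V"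
    and S: "\<forall>s\<in>S. 2 \<le> f s" using adm S2 unfolding admissible_def by auto
  have "\<forall>v\<in>V - S. f v = 1"
  proof
    fix v assume "v \<in> V - S"
    then have "\<not> 2 \<le> f v" "1 \<le> f v" using False V(3) by auto
    then show "f v = 1" by linarith
  qed
  then have "sum f (V - S) = card (V - S)" by simp
  then have sumS: "sum f S = card V + card S - 2"
    using sum.subset_diff[OF V(2,1), of f] card_Diff_subset[OF finite_subset[OF V(2,1)] V(2)]
      card_mono[OF V(1,2)] V(4) S2 by linarith
  obtain y where y: "y \<in> S" "y \<noteq> x"
    using S2 x(1) by (metis card_le_Suc0_iff_eq not_less_eq_eq numeral_2_eq_2 finite_subset V(1,2))
  show ?thesis
  proof (cases "card S = 2")
    case True
    then show ?thesis using that[of y] y V(2) S sumS by auto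
  next
    case False
    have "\<exists>w\<in>S - {x}. 3 \<le> f w"
    proof (rule ccontr)
      assume "\<not> ?thesis"
      then have "\<forall>s\<in>S. f s \<le> 2" using x y by (metis DiffI empty_iff insert_iff le_trans not_less_eq_eq numeral_2_eq_2 numeral_3_eq_3)
      then have "sum f S \<le> 2 * card S" using sum_bounded_above[of S f 2] by simp
      then show False using sumS V(5) S2 False by linarith
    qed
    then obtain w where "w \<in> S - {x}" "3 \<le> f w" by blast
    then show ?thesis using that[of w] V(2) sumS S2 by auto
  qed
qed

lemma sum_fun_upd_decrement:
  fixes f :: "'a \<Rightarrow> nat"
  assumes "finite A" "1 \<le> f w"
  shows "sum (f(w := f w - 1)) A = sum f A - (if w \<in> A then 1 else 0)"
proof (cases "w \<in> A")
  case True
  have "sum (f(w := f w - 1)) (A - {w}) = sum f (A - {w})" by (rule sum.cong) auto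
  then show ?thesis
    using sum.remove[OF assms(1) True, of f] sum.remove[OF assms(1) True, of "f(w := f w - 1)"] assms(2) True
    by simp
next
  case False
  then show ?thesis by (simp, intro sum.cong) auto
qed

lemma card_sum_remove_star:
  fixes f :: "'a \<Rightarrow> nat"
  assumes "finite V" "x \<in> V" "L \<subseteq> {v \<in> V. f v = 1}" "x \<notin> L" "card L = f x - 1" "1 \<le> f x"
  shows "card (V - insert x L) = card V - f x" and "sum f V = 2 * f x - 1 + sum f (V - insert x L)"
proof -
  have L: "insert x L \<subseteq> V" "finite L" using assms(1-3) finite_subset[of L V] by auto
  have "\<forall>v\<in>L. f v = 1" using assms(3) by blast
  then have "sum f (insert x L) = 2 * f x - 1" using L(2) assms(4-6) by simp
  then show "sum f V = 2 * f x - 1 + sum f (V - insert x L)"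
    using sum.subset_diff[OF L(1) assms(1), of f] by simp
  show "card (V - insert x L) = card V - f x"
    using card_Diff_subset[OF _ L(1)] L(2) assms(4-6) by simp
qed

lemma admissible_remove_pivot:
  assumes adm: "admissible V f S" and S2: "2 \<le> card S" and x: "x \<in> S" "\<forall>y\<in>S. f x \<le> f y"
    and Lx: "Lx \<subseteq> {v \<in> V. f v = 1}" "card Lx = f x - 1"
    and w: "w \<in> V" "w \<noteq> x" "2 \<le> f w" "w \<in> S \<Longrightarrow> card V \<le> sum f S \<and> (card S = 2 \<or> 3 \<le> f w)"
  shows "admissible (V - insert x Lx) (f(w := f w - 1)) (S - {x})"
proof -
  let ?V = "V - insert x Lx" and ?f = "f(w := f w - 1)" and ?S = "S - {x}"
  have V: "finite V" "2 \<le> card V" "\<forall>v\<in>V. 1 \<le> f v" "sum f V = 2 * card V - 2" "S \<subseteq> V"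
    "card V - 1 \<le> sum f S" and S: "\<forall>s\<in>S. 2 \<le> f s"
    using adm S2 unfolding admissible_def by auto
  have room: "2 * (card S - 1) + f x \<le> card V" by (rule admissible_pivot_room(2)[OF adm S2 x])
  have LxV: "x \<notin> Lx" "w \<notin> Lx" "S \<inter> Lx = {}" using Lx(1) x(1) w(3) S by fastforce+
  have fx: "2 \<le> f x" using S x(1) by blast
  have cardV': "card ?V = card V - f x" and sumV': "sum f V = 2 * f x - 1 + sum f ?V"
    using card_sum_remove_star[OF V(1) _ Lx(1) LxV(1) Lx(2)] x(1) V(5) fx by auto
  have finS: "finite S" using V(1,5) finite_subset by blast
  have sumS': "sum f S = f x + sum f ?S" using finS x(1) by (simp add: sum.remove)
  have w': "w \<in> ?V" using w LxV by auto
  show ?thesis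
    unfolding admissible_def
  proof (intro conjI)
    show "finite ?V" "?S \<subseteq> ?V" using V(1,5) LxV(3) by auto
    show "?S \<noteq> {}" using S2 card_mono[of "{x}" S] by auto
    show "2 \<le> card ?V" "2 * card ?S \<le> card ?V" using cardV' room S2 finS x(1) by auto
    show "\<forall>v\<in>?V. 1 \<le> ?f v" using V(3) w(3) by auto
    have "sum ?f ?V = sum f ?V - 1" using sum_fun_upd_decrement[of ?V f w] w' w(3) V(1) by simp
    then show "sum ?f ?V = 2 * card ?V - 2" using V(4) sumV' cardV' room S2 fx by linarith
    have "sum ?f ?S = sum f ?S - (if w \<in> S then 1 else 0)"
      using sum_fun_upd_decrement[of ?S f w] finS w(2,3) by simp
    then show "card ?V - 1 \<le> sum ?f ?S" using w(4) V(6) sumS' cardV' by (cases "w \<in> S") auto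
    show "card ?S = 1 \<or> (\<forall>s\<in>?S. 2 \<le> ?f s)"
    proof (cases "card S = 2")
      case True
      then show ?thesis using finS x(1) by simp
    next
      case False
      have "2 \<le> ?f s" if "s \<in> ?S" for s
        using that S w(4) False by (cases "s = w") auto
      then show ?thesis by blast
    qed
  qed
qed

lemma admissible_pivot:
  assumes adm: "admissible V f S" and S2: "2 \<le> card S"
  obtains x Lx w where "x \<in> S" "2 \<le> f x" "Lx \<subseteq> {v \<in> V. f v = 1}" "card Lx = f x - 1" "finite Lx"
    "w \<in> V" "w \<noteq> x" "2 \<le> f w" "admissible (V - insert x Lx) (f(w := f w - 1)) (S - {x})"
proof -
  obtain x0 where "x0 \<in> S" using S2 by force
  then obtain x where x: "x \<in> S" "\<forall>y\<in>S. f x \<le> f y"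
    using ex_has_least_nat[of "\<lambda>x. x \<in> S" x0 f] by blast
  have "2 \<le> f x" using adm S2 x(1) unfolding admissible_def by auto
  moreover obtain Lx where "Lx \<subseteq> {v \<in> V. f v = 1}" "card Lx = f x - 1" "finite Lx"
    using admissible_pivot_room(1)[OF adm S2 x] by (rule obtain_subset_with_card_n)
  moreover obtain w where "w \<in> V" "w \<noteq> x" "2 \<le> f w"
    "w \<in> S \<Longrightarrow> card V \<le> sum f S \<and> (card S = 2 \<or> 3 \<le> f w)"
    using admissible_pivot_partner[OF adm S2 x] by blast
  ultimately show ?thesis using that x(1) admissible_remove_pivot[OF adm S2 x] by blast
qed

lemma admissible_realisation:
  assumes "admissible V f S"
  shows "\<exists>E M. is_tree V E \<and> (\<forall>v\<in>V. degree E v = f v) \<and> vertex_cover E S \<and>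
    is_matching E M \<and> card M = card S"
  using assms
proof (induction "card S" arbitrary: V f S rule: less_induct)
  case less
  note adm = less.prems
  have finS: "finite S" and "S \<noteq> {}" and SV: "S \<subseteq> V"
    using adm finite_subset unfolding admissible_def by auto
  show ?case
  proof (cases "card S = 1")
    case True
    then obtain s where "S = {s}" by (rule card_1_singletonE)
    then show ?thesis using admissible_star[of V f s] adm by simp
  next
    case False
    moreover have "card S \<noteq> 0" using finS \<open>S \<noteq> {}\<close> by simp
    ultimately have S2: "2 \<le> card S" by linarith
    obtain x Lx w where x: "x \<in> S" "2 \<le> f x" and Lx: "Lx \<subseteq> {v \<in> V. f v = 1}" "card Lx = f x - 1"
      "finite Lx" and w: "w \<in> V" "w \<noteq> x" "2 \<le> f w"
      and adm': "admissible (V - insert x Lx) (f(w := f w - 1)) (S - {x})"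
      using admissible_pivot[OF adm S2] by blast
    obtain E' M' where E': "is_tree (V - insert x Lx) E'"
      "\<forall>v\<in>V - insert x Lx. degree E' v = (f(w := f w - 1)) v"
      "vertex_cover E' (S - {x})" "is_matching E' M'" "card M' = card (S - {x})"
      using less.hyps[OF card_Diff1_less[OF finS x(1)] adm'] by blast
    have "Lx \<noteq> {}" using Lx(2) x(2) by (intro notI) simp
    then obtain l where l: "l \<in> Lx" by blast
    have "x \<notin> Lx" "w \<notin> Lx" "Lx \<subseteq> V" using Lx(1) x(2) w(3) by auto
    then have "insert x (V - insert x Lx) \<union> Lx = V" "insert x (S - {x}) = S"
      "Suc (card (S - {x})) = card S" and w': "w \<in> V - insert x Lx" "1 \<le> f w"
      and x': "x \<notin> V - insert x Lx" "x \<notin> Lx" "card Lx = f x - 1" "1 \<le> f x"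
      and Lx': "finite Lx" "Lx \<inter> (V - insert x Lx) = {}" "l \<in> Lx" "\<forall>v\<in>Lx. f v = 1"
      using x SV S2 finS w Lx l by auto
    then show ?thesis using realisation_attach_star[OF E'(1-4) w' x' Lx'] E'(5) by auto
  qed
qed

lemma tree_matching_number_bounds:
  fixes E :: "nat set set"
  assumes T: "is_tree {0..<n} E" and "3 \<le> n"
  defines "d \<equiv> degree_sequence n E"
  shows "(LEAST k. n - 1 \<le> sum_list (take k d)) \<le> matching_number E"
    and "matching_number E \<le> min (n div 2) (n - n1 d)"
proof -
  have sg: "simple_graph {0..<n} E" and ac: "acyclic_graph E" using T is_tree_def by auto
  obtain M C where MC: "is_matching E M" "C \<subseteq> {0..<n}" "vertex_cover E C" "card C \<le> card M"
    using forest_matching_cover[OF sg ac] by blast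
  have C: "card C \<le> matching_number E" using MC(4) card_le_matching_number[OF sg MC(1)] by simp
  have "n - 1 = card E" using tree_card_edges[OF T] by simp
  also have "\<dots> \<le> (\<Sum>c\<in>C. degree E c)"
    using card_le_sum_degree_cover simple_graph_finite_edges[OF sg] MC(2,3) finite_subset by blast
  also have "\<dots> \<le> sum_list (take (card C) d)"
    unfolding d_def using MC(2) by (rule sum_degree_le_sum_take_degree_sequence)
  also have "\<dots> \<le> sum_list (take (matching_number E) d)" using C by (rule sum_list_take_mono)
  finally show "(LEAST k. n - 1 \<le> sum_list (take k d)) \<le> matching_number E" by (rule Least_le)
  obtain M0 where M0: "is_matching E M0" "card M0 = matching_number E"
    using matching_number_attained[OF sg] by blast
  have "2 * matching_number E \<le> n" using matching_card_le_half[OF sg M0(1)] M0(2) by simp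
  moreover have "matching_number E \<le> card {v \<in> {0..<n}. degree E v \<noteq> 1}"
    using card_matching_le_cover[OF M0(1) _ tree_nonleaves_vertex_cover[OF T]] M0(2) \<open>3 \<le> n\<close> by simp
  moreover have "card {v \<in> {0..<n}. degree E v \<noteq> 1} = n - n1 d"
  proof -
    let ?B = "{v \<in> {0..<n}. degree E v = 1}"
    have "{v \<in> {0..<n}. degree E v \<noteq> 1} = {0..<n} - ?B" by auto
    moreover have "card ({0..<n} - ?B) = card {0..<n} - card ?B"
      by (rule card_Diff_subset) (simp_all add: subset_iff)
    ultimately show ?thesis unfolding d_def n1_degree_sequence by simp
  qed
  ultimately show "matching_number E \<le> min (n div 2) (n - n1 d)" by simp
qed

lemma tree_with_matching_number:
  fixes E0 :: "nat set set"
  assumes T: "is_tree {0..<n} E0" and "3 \<le> n"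
  defines "d \<equiv> degree_sequence n E0"
  assumes lo: "(LEAST k. n - 1 \<le> sum_list (take k d)) \<le> m"
    and hi: "m \<le> min (n div 2) (n - n1 d)"
  shows "\<exists>E. is_tree {0..<n} E \<and> degree_sequence n E = d \<and> matching_number E = m"
proof -
  have len: "length d = n" and sorted: "sorted_wrt (\<ge>) d" and pos: "\<forall>x\<in>set d. 1 \<le> x"
    and sum: "sum_list d = 2 * n - 2"
    using degree_sequence_tree_pos[OF T] sum_list_degree_sequence_tree[OF T] \<open>3 \<le> n\<close>
    unfolding d_def by (auto simp: sorted_degree_sequence)
  have "n - 1 \<le> sum_list (take n d)" using sum len by simp
  then have "n - 1 \<le> sum_list (take (LEAST k. n - 1 \<le> sum_list (take k d)) d)" by (rule LeastI)
  then have cover: "n - 1 \<le> sum_list (take m d)" using sum_list_take_mono[OF lo] by (rule order_trans)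
  then have "m \<noteq> 0" using \<open>3 \<le> n\<close> by (intro notI) simp
  have sum_nth: "sum_list (take k d) = (\<Sum>i\<in>{0..<k}. d ! i)" if "k \<le> n" for k
    using that len by (simp add: sum_list_sum_nth)
  have "admissible {0..<n} (\<lambda>i. d ! i) {0..<m}"
    unfolding admissible_def
    using \<open>3 \<le> n\<close> \<open>m \<noteq> 0\<close> hi cover pos sum sum_nth[of n] sum_nth[of m] len
      sorted_nth_ge_two[OF sorted pos] by auto
  then obtain E M where E: "is_tree {0..<n} E" "\<forall>v\<in>{0..<n}. degree E v = d ! v"
    "vertex_cover E {0..<m}" "is_matching E M" "card M = card {0..<m}"
    using admissible_realisation by blast
  have "degree_sequence n E = d" using degree_sequence_eqI[OF sorted] E(2) len by simp
  moreover have "matching_number E = m"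
    using matching_number_eqI[of "{0..<n}" E M "{0..<m}"] E T unfolding is_tree_def by simp
  ultimately show ?thesis using E(1) by blast
qed

theorem theorem1:
  fixes d :: "nat list" and \<nu> :: int
  assumes "tree_degree_sequence d"
    and "length d \<ge> 3"
  shows "(\<exists>E. is_tree {0..<length d} E \<and> degree_sequence (length d) E = d
              \<and> int (matching_number E) = \<nu>)
     \<longleftrightarrow> int (LEAST k. sum_list (take k d) \<ge> length d - 1) \<le> \<nu>
         \<and> \<nu> \<le> int (min (length d div 2) (length d - n1 d))"
proof
  assume "\<exists>E. is_tree {0..<length d} E \<and> degree_sequence (length d) E = d
    \<and> int (matching_number E) = \<nu>"
  then obtain E where "is_tree {0..<length d} E" "degree_sequence (length d) E = d"
    "int (matching_number E) = \<nu>" by blast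
  then show "int (LEAST k. sum_list (take k d) \<ge> length d - 1) \<le> \<nu>
      \<and> \<nu> \<le> int (min (length d div 2) (length d - n1 d))"
    using tree_matching_number_bounds[of "length d" E] assms(2) by auto
next
  assume bounds: "int (LEAST k. sum_list (take k d) \<ge> length d - 1) \<le> \<nu>
      \<and> \<nu> \<le> int (min (length d div 2) (length d - n1 d))"
  obtain E0 where E0: "is_tree {0..<length d} E0" "degree_sequence (length d) E0 = d"
    using assms(1) unfolding tree_degree_sequence_def by blast
  have "(LEAST k. sum_list (take k d) \<ge> length d - 1) \<le> nat \<nu>"
    "nat \<nu> \<le> min (length d div 2) (length d - n1 d)" using bounds by linarith+
  then obtain E where "is_tree {0..<length d} E" "degree_sequence (length d) E = d"
    "matching_number E = nat \<nu>"
    using tree_with_matching_number[OF E0(1) assms(2), of "nat \<nu>"] E0(2) by auto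
  then show "\<exists>E. is_tree {0..<length d} E \<and> degree_sequence (length d) E = d
      \<and> int (matching_number E) = \<nu>"
    using bounds by auto
qed

end
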